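(* Let $\alpha>1$ and let $d>1$ be an integer. Let $L_d(\alpha)=\{\alpha^n : n\in\mathbb{N}_0\}^d\subseteq\mathbb{R}^d$ and $k=\left\lfloor\sqrt{\tfrac{1}{\alpha-1}}\,\right\rfloor$. Then \[h(L_d(\alpha))\ge\binom{k+d-1}{d-1}.\]
   Context: For a set $S\subseteq\mathbb{R}^d$, the Helly number $h(S)$ is the smallest $h$ such that the following holds: for every finite family $\mathcal{F}$ of convex sets in $\mathbb{R}^d$, if every $h$ or fewer sets of $\mathcal{F}$ have a point of $S$ in their intersection, then the intersection of all sets of $\mathcal{F}$ contains a point of $S$. If no such $h$ exists, $h(S)=\infty$. Here $\mathbb{N}_0=\{0,1,2,\dots\}$. *)

theory Defs
  imports "HOL-Analysis.Analysis" "HOL-Library.Extended_Nat"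
begin

definition helly_prop :: "('a::real_vector) set \<Rightarrow> nat \<Rightarrow> bool" where
  "helly_prop S h \<longleftrightarrow>
     (\<forall>F. finite F \<and> (\<forall>C\<in>F. convex C) \<and>
          (\<forall>G. G \<subseteq> F \<and> card G \<le> h \<longrightarrow> \<Inter>G \<inter> S \<noteq> {})
        \<longrightarrow> \<Inter>F \<inter> S \<noteq> {})"

definition helly_number :: "('a::real_vector) set \<Rightarrow> enat" where
  "helly_number S = (if \<exists>h. helly_prop S h then enat (LEAST h. helly_prop S h) else \<infinity>)"

definition lattice_L :: "real \<Rightarrow> (real ^ 'n) set" where
  "lattice_L \<alpha> = {x. \<forall>i. \<exists>n::nat. x $ i = \<alpha> ^ n}"

end

theory Submission
  imports Defs "HOL-Library.Multiset"
begin

text \<open>Let X be the set of points \<open>\<alpha>\<^sup>a = (\<alpha>^a\<^sub>1, \<dots>, \<alpha>^a\<^sub>d)\<close> with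
  \<open>a\<^sub>1 + \<dots> + a\<^sub>d = k\<close>; it has \<open>(k + d - 1 choose d - 1)\<close> elements. If no point of X lies
  in the convex hull of the others and \<open>conv X\<close> contains no further point of \<open>L\<^sub>d(\<alpha>)\<close>,
  then the sets \<open>conv (X - {x})\<close>, \<open>x \<in> X\<close>, witness \<open>h(L\<^sub>d(\<alpha>)) \<ge> |X|\<close>: any \<open>|X| - 1\<close>
  of them share a point of X, but a point of \<open>L\<^sub>d(\<alpha>)\<close> common to all of them would be a
  point of \<open>conv X\<close> outside X.

  Both properties come from separating a lattice point \<open>\<alpha>\<^sup>b\<close> from the points \<open>\<alpha>\<^sup>a\<close> by a
  hyperplane with normal \<open>(\<alpha>^-b\<^sub>i)\<^sub>i\<close>. If \<open>|b| \<le> |a|\<close> and \<open>a \<noteq> b\<close>, then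
  \<open>\<Sum>\<^sub>i \<alpha>^(a\<^sub>i - b\<^sub>i) > d\<close> because \<open>e\<^sup>x > 1 + x\<close> for \<open>x \<noteq> 0\<close>. If \<open>|b| > k\<close>, the normal is
  restricted to the support J of b; let P and N be the sums over J of the positive and
  negative parts of \<open>a\<^sub>i - b\<^sub>i\<close>. Superadditivity of \<open>n \<mapsto> \<beta>\<^sup>n - 1\<close> gives \<open>\<Sum>\<^sub>J \<alpha>^(a\<^sub>i - b\<^sub>i) \<le> |J| + \<alpha>\<^sup>P + \<alpha>^-N - 2\<close>,
  where \<open>N > P\<close>, and \<open>P < k\<close> unless \<open>P = 0\<close>. Finally, with \<open>t = ln \<alpha>\<close> and
  \<open>s = (P + 1/2) t\<close>, \<open>\<alpha>\<^sup>P + \<alpha>^-(P+1) = 2 e^(-t/2) cosh s \<le> 2 e^((s\<^sup>2 - t)/2) < 2\<close>, since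
  \<open>s\<^sup>2 < k\<^sup>2 t\<^sup>2 \<le> k\<^sup>2 (\<alpha> - 1) t \<le> t\<close>: this is where the choice of k enters.\<close>

lemma sum_count_UNIV: "sum (count M) (UNIV :: 'a::finite set) = size M"
proof -
  have "size M = sum (count M) (set_mset M)"
    by (simp add: size_multiset_overloaded_eq)
  also have "\<dots> = sum (count M) UNIV"
    by (rule sum.mono_neutral_left) (auto simp: not_in_iff)
  finally show ?thesis by simp
qed

lemma card_funs_sum_eq:
  "card {a :: 'a::finite \<Rightarrow> nat. sum a UNIV = k} = (k + CARD('a) - 1) choose (CARD('a) - 1)"
proof -
  have "bij_betw count (multisets_of_size UNIV k) {a :: 'a \<Rightarrow> nat. sum a UNIV = k}"
  proof (rule bij_betwI[where g = Abs_multiset])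
    show "count \<in> multisets_of_size UNIV k \<rightarrow> {a :: 'a \<Rightarrow> nat. sum a UNIV = k}"
      by (auto simp: multisets_of_size_def sum_count_UNIV)
    show "Abs_multiset \<in> {a :: 'a \<Rightarrow> nat. sum a UNIV = k} \<rightarrow> multisets_of_size UNIV k"
      by (auto simp: multisets_of_size_def count_Abs_multiset simp flip: sum_count_UNIV)
  qed (auto simp: count_Abs_multiset count_inverse)
  then have "card {a :: 'a \<Rightarrow> nat. sum a UNIV = k} = card (multisets_of_size (UNIV :: 'a set) k)"
    by (simp add: bij_betw_same_card)
  also have "\<dots> = (CARD('a) + k - 1) choose k"
    by (simp add: card_multisets_of_size)
  also have "\<dots> = (k + CARD('a) - 1) choose (CARD('a) - 1)"
    by (subst binomial_symmetric) (auto simp: add.commute Suc_le_eq)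
  finally show ?thesis .
qed

lemma two_power_mult_fact_le_fact_double: "2 ^ m * fact m \<le> (fact (2 * m) :: real)"
proof (induction m)
  case 0
  then show ?case by simp
next
  case (Suc m)
  have "(2::real) ^ Suc m * fact (Suc m) = (2 * real m + 2) * (2 ^ m * fact m)"
    by (simp add: algebra_simps)
  also have "\<dots> \<le> ((2 * real m + 2) * (2 * real m + 1)) * fact (2 * m)"
    by (rule mult_mono) (use Suc in \<open>auto simp: algebra_simps\<close>)
  also have "\<dots> = fact (2 * Suc m)"
    by (simp add: algebra_simps)
  finally show ?case .
qed

lemma cosh_le_exp_half_square: "cosh x \<le> exp (x\<^sup>2 / 2)" for x :: real
proof -
  have "(\<lambda>n. if even n then (x\<^sup>2 / 2) ^ (n div 2) /\<^sub>R fact (n div 2) else 0) sums exp (x\<^sup>2 / 2)"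
    using sums_if[OF sums_zero exp_converges[of "x\<^sup>2 / 2"]] by simp
  then show ?thesis
  proof (rule sums_le[OF _ cosh_converges, rotated])
    fix n :: nat
    show "(if even n then x ^ n /\<^sub>R fact n else 0)
      \<le> (if even n then (x\<^sup>2 / 2) ^ (n div 2) /\<^sub>R fact (n div 2) else 0)"
    proof (cases "even n")
      case True
      then obtain m where n: "n = 2 * m" by blast
      have "x ^ n /\<^sub>R fact n = (x\<^sup>2) ^ m / fact (2 * m)"
        unfolding n power_mult by (simp add: field_simps)
      also have "\<dots> \<le> (x\<^sup>2) ^ m / (2 ^ m * fact m)"
        by (rule divide_left_mono[OF two_power_mult_fact_le_fact_double]) auto
      also have "\<dots> = (x\<^sup>2 / 2) ^ (n div 2) /\<^sub>R fact (n div 2)"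
        by (simp add: n power_divide field_simps)
      finally show ?thesis
        using True by simp
    qed simp
  qed
qed

lemma add_one_less_exp:
  fixes x :: real
  assumes "x \<noteq> 0"
  shows "1 + x < exp x"
proof (cases "1 + x / 2 < 0")
  case True
  then show ?thesis using exp_gt_zero[of x] by linarith
next
  case False
  have "(1 + x / 2)\<^sup>2 = 1 + x + x\<^sup>2 / 4"
    by (simp add: power2_eq_square field_simps)
  then have "1 + x < (1 + x / 2)\<^sup>2"
    using assms by simp
  also have "\<dots> \<le> exp (x / 2) ^ 2"
    using False exp_ge_add_one_self[of "x / 2"] by (intro power_mono) auto
  also have "\<dots> = exp x"
    by (simp flip: exp_of_nat_mult)
  finally show ?thesis .
qed

lemma power_ratio_eq_exp:
  fixes \<alpha> :: real
  assumes "\<alpha> > 0"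
  shows "\<alpha> ^ m / \<alpha> ^ n = exp ((real m - real n) * ln \<alpha>)"
  using assms by (simp add: left_diff_distrib exp_diff exp_of_nat_mult)

lemma power_ratio_split:
  fixes \<alpha> :: real
  assumes "\<alpha> > 0"
  shows "\<alpha> ^ m / \<alpha> ^ n = (\<alpha> ^ (m - n) - 1) + ((1 / \<alpha>) ^ (n - m) - 1) + 1"
proof (cases "n \<le> m")
  case True
  then show ?thesis
    using assms by (simp add: power_diff)
next
  case False
  then have "\<alpha> ^ n = \<alpha> ^ m * \<alpha> ^ (n - m)"
    by (simp flip: power_add)
  then show ?thesis
    using assms False by (simp add: power_one_over)
qed

lemma sum_power_minus_one_le_power_sum_minus_one:
  fixes \<beta> :: real
  assumes "\<beta> \<ge> 0" "finite I"
  shows "(\<Sum>i\<in>I. \<beta> ^ n i - 1) \<le> \<beta> ^ (\<Sum>i\<in>I. n i) - 1"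
  using assms(2)
proof (induction I rule: finite_induct)
  case empty
  then show ?case by simp
next
  case (insert x F)
  have "0 \<le> (\<beta> ^ n x - 1) * (\<beta> ^ (\<Sum>i\<in>F. n i) - 1)"
  proof (cases "\<beta> \<ge> 1")
    case True
    then show ?thesis by (simp add: one_le_power)
  next
    case False
    then show ?thesis
      using assms(1) by (intro mult_nonpos_nonpos) (auto simp: power_le_one)
  qed
  then show ?case
    using insert by (simp add: power_add algebra_simps)
qed

lemma power_add_inverse_power_lt_two:
  fixes \<alpha> :: real
  assumes "\<alpha> > 1" "real k ^ 2 * (\<alpha> - 1) \<le> 1" "P < k"
  shows "\<alpha> ^ P + (1 / \<alpha>) ^ Suc P < 2"
proof -
  define t where "t = ln \<alpha>"
  define s where "s = (real P + 1 / 2) * t"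
  have t: "0 < t" "t \<le> \<alpha> - 1"
    using assms(1) ln_le_minus_one[of \<alpha>] by (auto simp: t_def)
  have "s\<^sup>2 = (real P + 1 / 2)\<^sup>2 * t * t"
    by (simp add: s_def power2_eq_square)
  also have "\<dots> < real k ^ 2 * (\<alpha> - 1) * t"
    using assms(3) t by (intro mult_strict_right_mono mult_less_le_imp_less power_strict_mono) auto
  also have "\<dots> \<le> t"
    using assms(2) t by simp
  finally have "s\<^sup>2 < t" .
  have power_eq: "\<alpha> ^ n = exp (real n * t)" for n
    using assms(1) by (simp add: t_def exp_of_nat_mult)
  have "\<alpha> ^ P + (1 / \<alpha>) ^ Suc P = exp (real P * t) + exp (- (real (Suc P) * t))"
    unfolding power_one_over power_eq exp_minus by (simp only: inverse_eq_divide)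
  also have "\<dots> = exp (- t / 2 + s) + exp (- t / 2 + - s)"
    by (simp add: s_def algebra_simps)
  also have "\<dots> = exp (- t / 2) * (2 * cosh s)"
    by (simp only: exp_add cosh_field_def) (simp add: algebra_simps)
  also have "\<dots> \<le> exp (- t / 2) * (2 * exp (s\<^sup>2 / 2))"
    by (intro mult_left_mono cosh_le_exp_half_square) auto
  also have "\<dots> = 2 * exp ((s\<^sup>2 - t) / 2)"
    by (simp add: diff_divide_distrib flip: exp_add)
  also have "\<dots> < 2"
    using \<open>s\<^sup>2 < t\<close> by simp
  finally show ?thesis .
qed

lemma nat_floor_sqrt_inverse_bound:
  fixes \<alpha> :: real
  assumes "\<alpha> > 1"
  shows "real (nat \<lfloor>sqrt (1 / (\<alpha> - 1))\<rfloor>) ^ 2 * (\<alpha> - 1) \<le> 1"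
proof -
  have "real (nat \<lfloor>sqrt (1 / (\<alpha> - 1))\<rfloor>) \<le> sqrt (1 / (\<alpha> - 1))"
    using assms by simp
  then have "real (nat \<lfloor>sqrt (1 / (\<alpha> - 1))\<rfloor>) ^ 2 \<le> sqrt (1 / (\<alpha> - 1)) ^ 2"
    by (rule power_mono) simp
  also have "\<dots> = 1 / (\<alpha> - 1)"
    using assms by simp
  finally show ?thesis
    using assms by (simp add: field_simps)
qed

lemma helly_propD:
  assumes "helly_prop S h" "finite F" "\<And>C. C \<in> F \<Longrightarrow> convex C"
    and "\<And>G. G \<subseteq> F \<Longrightarrow> card G \<le> h \<Longrightarrow> \<Inter>G \<inter> S \<noteq> {}"
  shows "\<Inter>F \<inter> S \<noteq> {}"
  using assms unfolding helly_prop_def by blast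

lemma helly_number_geI:
  assumes "\<And>h. h < n \<Longrightarrow> \<not> helly_prop S h"
  shows "enat n \<le> helly_number S"
proof (cases "\<exists>h. helly_prop S h")
  case True
  then have "helly_prop S (LEAST h. helly_prop S h)"
    by (rule LeastI_ex)
  then have "n \<le> (LEAST h. helly_prop S h)"
    using assms not_le by blast
  then show ?thesis
    using True by (simp add: helly_number_def)
next
  case False
  then show ?thesis
    by (simp add: helly_number_def)
qed

lemma helly_number_ge_card:
  fixes S X :: "'a::real_vector set"
  assumes "finite X" "X \<subseteq> S"
    and vertex: "\<And>x. x \<in> X \<Longrightarrow> x \<notin> convex hull (X - {x})"
    and no_new_points: "S \<inter> convex hull X \<subseteq> X"
  shows "enat (card X) \<le> helly_number S"
proof (rule helly_number_geI)
  fix h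
  assume h: "h < card X"
  define C where "C x = convex hull (X - {x})" for x
  have in_C: "x \<in> C y" if "x \<in> X" "x \<noteq> y" for x y
    using that by (auto simp: C_def intro: hull_inc)
  have "inj_on C X"
    by (rule inj_onI) (metis C_def in_C vertex)
  then have card_F: "card (C ` X) = card X"
    by (rule card_image)
  show "\<not> helly_prop S h"
  proof
    assume "helly_prop S h"
    moreover have "finite (C ` X)" "\<And>D. D \<in> C ` X \<Longrightarrow> convex D"
      using assms(1) by (auto simp: C_def convex_convex_hull)
    moreover have "\<Inter>G \<inter> S \<noteq> {}" if G: "G \<subseteq> C ` X" "card G \<le> h" for G
    proof -
      have "G \<noteq> C ` X"
        using G h card_F by auto
      then obtain x where x: "x \<in> X" "C x \<notin> G"
        using G(1) by (metis image_subset_iff subset_antisym subsetI)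
      have "x \<in> D" if "D \<in> G" for D
      proof -
        obtain y where "y \<in> X" "D = C y"
          using \<open>D \<in> G\<close> G(1) by blast
        then show ?thesis
          using x \<open>D \<in> G\<close> in_C by fastforce
      qed
      then show ?thesis
        using x(1) assms(2) by blast
    qed
    ultimately have "\<Inter>(C ` X) \<inter> S \<noteq> {}"
      by (rule helly_propD)
    then obtain z where z: "z \<in> \<Inter>(C ` X)" "z \<in> S"
      by blast
    obtain x where "x \<in> X"
      using h by fastforce
    then have "z \<in> convex hull X"
      using z(1) hull_mono[of "X - {x}" X] by (auto simp: C_def)
    then have "z \<in> X"
      using z(2) no_new_points by blast
    then show False
      using z(1) vertex by (auto simp: C_def)
  qed
qed

lemma notin_convex_hull_if_inner_less:
  fixes w z :: "'a::real_inner"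
  assumes "\<And>y. y \<in> X \<Longrightarrow> w \<bullet> y < c" "c \<le> w \<bullet> z"
  shows "z \<notin> convex hull X"
proof
  assume "z \<in> convex hull X"
  also have "convex hull X \<subseteq> {y. w \<bullet> y < c}"
    using assms(1) by (intro hull_minimal convex_halfspace_lt) auto
  finally show False
    using assms(2) by simp
qed

definition lattice_point :: "real \<Rightarrow> ('n::finite \<Rightarrow> nat) \<Rightarrow> real ^ 'n" where
  "lattice_point \<alpha> a = (\<chi> i. \<alpha> ^ a i)"

lemma lattice_L_eq_range: "lattice_L \<alpha> = range (lattice_point \<alpha>)"
  unfolding lattice_L_def lattice_point_def
  by (fastforce simp: vec_eq_iff dest: choice)

lemma inj_lattice_point: "\<alpha> > 1 \<Longrightarrow> inj (lattice_point \<alpha>)"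
  by (auto simp: inj_def lattice_point_def vec_eq_iff)

lemma inner_lattice_point:
  "(\<chi> i. if P i then 1 / \<alpha> ^ b i else 0) \<bullet> lattice_point \<alpha> a = (\<Sum>i | P i. \<alpha> ^ a i / \<alpha> ^ b i)"
proof -
  have "(\<chi> i. if P i then 1 / \<alpha> ^ b i else 0) \<bullet> lattice_point \<alpha> a
      = (\<Sum>i\<in>UNIV. if P i then \<alpha> ^ a i / \<alpha> ^ b i else 0)"
    unfolding inner_vec_def lattice_point_def by (intro sum.cong) auto
  then show ?thesis
    by (simp add: sum.If_cases)
qed

lemma sum_power_ratio_gt_card:
  fixes a b :: "'n::finite \<Rightarrow> nat" and \<alpha> :: real
  assumes "\<alpha> > 1" "sum b UNIV \<le> sum a UNIV" "a \<noteq> b"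
  shows "real CARD('n) < (\<Sum>i\<in>UNIV. \<alpha> ^ a i / \<alpha> ^ b i)"
proof -
  define t where "t = ln \<alpha>"
  have "t > 0"
    using assms(1) by (simp add: t_def)
  have ratio: "\<alpha> ^ a i / \<alpha> ^ b i = exp ((real (a i) - real (b i)) * t)" for i
    using assms(1) by (simp add: t_def power_ratio_eq_exp)
  obtain j where "a j \<noteq> b j"
    using assms(3) by blast
  have "(\<Sum>i\<in>UNIV. 1 + (real (a i) - real (b i)) * t)
      = real CARD('n) + (real (sum a UNIV) - real (sum b UNIV)) * t"
    by (simp add: sum.distrib sum_subtractf left_diff_distrib sum_distrib_right)
  moreover have "0 \<le> (real (sum a UNIV) - real (sum b UNIV)) * t"
    using assms(2) \<open>t > 0\<close> by (simp del: of_nat_sum)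
  ultimately have "real CARD('n) \<le> (\<Sum>i\<in>UNIV. 1 + (real (a i) - real (b i)) * t)"
    by linarith
  also have "\<dots> < (\<Sum>i\<in>UNIV. \<alpha> ^ a i / \<alpha> ^ b i)"
    unfolding ratio
  proof (rule sum_strict_mono_ex1)
    show "\<forall>i\<in>UNIV. 1 + (real (a i) - real (b i)) * t \<le> exp ((real (a i) - real (b i)) * t)"
      by simp
    show "\<exists>i\<in>UNIV. 1 + (real (a i) - real (b i)) * t < exp ((real (a i) - real (b i)) * t)"
      using \<open>a j \<noteq> b j\<close> \<open>t > 0\<close> by (intro bexI[of _ j] add_one_less_exp) auto
  qed simp
  finally show ?thesis .
qed

lemma sum_power_ratio_support_lt_card:
  fixes a b :: "'n::finite \<Rightarrow> nat" and \<alpha> :: real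
  assumes "\<alpha> > 1" "real k ^ 2 * (\<alpha> - 1) \<le> 1" "sum a UNIV \<le> k" "k < sum b UNIV"
  shows "(\<Sum>i | 0 < b i. \<alpha> ^ a i / \<alpha> ^ b i) < card {i. 0 < b i}"
proof -
  define J where "J = {i. 0 < b i}"
  define P where "P = (\<Sum>i\<in>J. a i - b i)"
  define N where "N = (\<Sum>i\<in>J. b i - a i)"
  have sum_a: "sum a J \<le> k"
    using assms(3) sum_mono2[of UNIV J a] by simp
  have sum_b: "sum b J = sum b UNIV"
    unfolding J_def by (rule sum.mono_neutral_left) auto
  have "P + sum b J = N + sum a J"
    unfolding P_def N_def sum.distrib[symmetric] by (rule sum.cong) auto
  then have "P < N"
    using sum_a sum_b assms(4) by linarith
  have "P = 0 \<or> P < k"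
  proof (cases "\<exists>j\<in>J. 0 < a j")
    case True
    then obtain j where "j \<in> J" "0 < a j"
      by blast
    then have "P < sum a J"
      unfolding P_def by (intro sum_strict_mono_ex1) (auto simp: J_def)
    then show ?thesis
      using sum_a by simp
  next
    case False
    then show ?thesis
      by (simp add: P_def)
  qed
  then have "\<alpha> ^ P + (1 / \<alpha>) ^ Suc P < 2"
    using assms(1) power_add_inverse_power_lt_two[OF assms(1,2)] by auto
  moreover have "(1 / \<alpha>) ^ N \<le> (1 / \<alpha>) ^ Suc P"
    using \<open>P < N\<close> assms(1) by (intro power_decreasing) auto
  moreover have "(\<Sum>i\<in>J. \<alpha> ^ a i / \<alpha> ^ b i) \<le> (\<alpha> ^ P - 1) + ((1 / \<alpha>) ^ N - 1) + card J"
  proof -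
    have "(\<Sum>i\<in>J. \<alpha> ^ a i / \<alpha> ^ b i)
        = (\<Sum>i\<in>J. \<alpha> ^ (a i - b i) - 1) + (\<Sum>i\<in>J. (1 / \<alpha>) ^ (b i - a i) - 1) + card J"
      using assms(1) by (simp add: power_ratio_split sum.distrib sum_subtractf)
    also have "\<dots> \<le> (\<alpha> ^ P - 1) + ((1 / \<alpha>) ^ N - 1) + card J"
      unfolding P_def N_def using assms(1)
      by (intro add_mono sum_power_minus_one_le_power_sum_minus_one) auto
    finally show ?thesis .
  qed
  ultimately show ?thesis
    unfolding J_def by linarith
qed

lemma lattice_point_notin_convex_hull_of_larger:
  fixes b :: "'n::finite \<Rightarrow> nat"
  assumes "\<alpha> > 1" and "\<And>a. a \<in> B \<Longrightarrow> sum b UNIV \<le> sum a UNIV \<and> a \<noteq> b"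
  shows "lattice_point \<alpha> b \<notin> convex hull (lattice_point \<alpha> ` B)"
proof (rule notin_convex_hull_if_inner_less)
  let ?w = "\<chi> i. 1 / \<alpha> ^ b i"
  note inner_w = inner_lattice_point[of "\<lambda>_. True", simplified]
  show "- ?w \<bullet> y < - real CARD('n)" if "y \<in> lattice_point \<alpha> ` B" for y
    using that assms sum_power_ratio_gt_card[of \<alpha> b] by (auto simp: inner_w)
  show "- real CARD('n) \<le> - ?w \<bullet> lattice_point \<alpha> b"
    using assms(1) by (simp add: inner_w)
qed

lemma lattice_point_notin_convex_hull_of_smaller:
  fixes b :: "'n::finite \<Rightarrow> nat"
  assumes "\<alpha> > 1" "real k ^ 2 * (\<alpha> - 1) \<le> 1"
    and "\<And>a. a \<in> B \<Longrightarrow> sum a UNIV \<le> k" "k < sum b UNIV"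
  shows "lattice_point \<alpha> b \<notin> convex hull (lattice_point \<alpha> ` B)"
proof (rule notin_convex_hull_if_inner_less)
  let ?w = "\<chi> i. if 0 < b i then 1 / \<alpha> ^ b i else 0"
  show "?w \<bullet> y < real (card {i. 0 < b i})" if "y \<in> lattice_point \<alpha> ` B" for y
    using that assms sum_power_ratio_support_lt_card[of \<alpha> k _ b]
    by (auto simp: inner_lattice_point)
  show "real (card {i. 0 < b i}) \<le> ?w \<bullet> lattice_point \<alpha> b"
    using assms(1) by (simp add: inner_lattice_point)
qed

lemma lattice_point_notin_convex_hull_of_others:
  fixes A :: "('n::finite \<Rightarrow> nat) set"
  assumes "\<alpha> > 1" "x \<in> lattice_point \<alpha> ` A"
    and "\<And>a a'. a \<in> A \<Longrightarrow> a' \<in> A \<Longrightarrow> sum a UNIV = sum a' UNIV"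
  shows "x \<notin> convex hull (lattice_point \<alpha> ` A - {x})"
proof -
  obtain a where a: "a \<in> A" "x = lattice_point \<alpha> a"
    using assms(2) by blast
  have "lattice_point \<alpha> a \<notin> convex hull (lattice_point \<alpha> ` (A - {a}))"
  proof (rule lattice_point_notin_convex_hull_of_larger[OF assms(1)])
    fix a'
    assume "a' \<in> A - {a}"
    then show "sum a UNIV \<le> sum a' UNIV \<and> a' \<noteq> a"
      using assms(3)[of a' a] a(1) by auto
  qed
  then show ?thesis
    using image_set_diff[OF inj_lattice_point[OF assms(1)], of A "{a}"] a(2) by simp
qed

lemma lattice_L_inter_convex_hull_level_subset:
  fixes \<alpha> :: real
  assumes "\<alpha> > 1" "real k ^ 2 * (\<alpha> - 1) \<le> 1"
  defines "X \<equiv> lattice_point \<alpha> ` {a :: 'n::finite \<Rightarrow> nat. sum a UNIV = k}"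
  shows "lattice_L \<alpha> \<inter> convex hull X \<subseteq> X"
proof
  fix z
  assume "z \<in> lattice_L \<alpha> \<inter> convex hull X"
  then obtain b where b: "z = lattice_point \<alpha> b" and "z \<in> convex hull X"
    by (auto simp: lattice_L_eq_range)
  consider "sum b UNIV < k" | "sum b UNIV = k" | "k < sum b UNIV"
    by linarith
  then show "z \<in> X"
  proof cases
    case 1
    then have "z \<notin> convex hull X"
      unfolding b X_def using assms(1) by (intro lattice_point_notin_convex_hull_of_larger) auto
    then show ?thesis
      using \<open>z \<in> convex hull X\<close> by blast
  next
    case 2
    then show ?thesis
      by (simp add: b X_def)
  next
    case 3
    then have "z \<notin> convex hull X"
      unfolding b X_def using assms(1,2) by (intro lattice_point_notin_convex_hull_of_smaller) auto
    then show ?thesis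
      using \<open>z \<in> convex hull X\<close> by blast
  qed
qed

theorem theorem2:
  fixes \<alpha> :: real and k :: nat
  assumes "\<alpha> > 1"
    and "CARD('n::finite) > 1"
    and "k = nat \<lfloor>sqrt (1 / (\<alpha> - 1))\<rfloor>"
  shows "helly_number (lattice_L \<alpha> :: (real ^ 'n) set)
           \<ge> enat ((k + CARD('n) - 1) choose (CARD('n) - 1))"
proof -
  define X where "X = lattice_point \<alpha> ` {a :: 'n \<Rightarrow> nat. sum a UNIV = k}"
  have "card X = card {a :: 'n \<Rightarrow> nat. sum a UNIV = k}"
    unfolding X_def by (rule card_image inj_on_subset[OF inj_lattice_point[OF assms(1)]])+ simp
  also have "\<dots> = (k + CARD('n) - 1) choose (CARD('n) - 1)"
    by (rule card_funs_sum_eq)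
  finally have card_X: "card X = (k + CARD('n) - 1) choose (CARD('n) - 1)" .
  then have "finite X"
    by (intro card_ge_0_finite) (simp add: zero_less_binomial_iff)
  moreover have "X \<subseteq> lattice_L \<alpha>"
    by (auto simp: X_def lattice_L_eq_range)
  moreover have "x \<notin> convex hull (X - {x})" if "x \<in> X" for x
    using assms(1) that unfolding X_def by (rule lattice_point_notin_convex_hull_of_others) simp
  moreover have "lattice_L \<alpha> \<inter> convex hull X \<subseteq> X"
    unfolding X_def using assms(1) nat_floor_sqrt_inverse_bound[OF assms(1)] assms(3)
    by (intro lattice_L_inter_convex_hull_level_subset) auto
  ultimately have "enat (card X) \<le> helly_number (lattice_L \<alpha> :: (real ^ 'n) set)"
    by (rule helly_number_ge_card)
  then show ?thesis
    by (simp add: card_X)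
qed

end
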